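(* Let $q$ be a prime power and let $n,k,r$ be integers with $4\le k\le\frac{n-1}{2}$, $n\le q$, and $2\le r\le k-2$; set $h=(k-1)+r$ and assume $h\le q-2$. Let $\alpha_1,\dots,\alpha_n\in\mathbb{F}_q$ be pairwise distinct and let $C_{h,k}$ be the linear code generated by the $k\times n$ matrix whose rows are $(\alpha_1^{e},\dots,\alpha_n^{e})$ for $e=0,1,\dots,k-2$ and $e=h$. If $C_{h,k}$ is MDS, then $C_{h,k}$ is a non-GRS MDS code.
   Context: Convention: $0^0=1$. A linear code is MDS if its parameters $[n,k,d]$ satisfy $d=n-k+1$. For pairwise distinct $a_1,\dots,a_n\in\mathbb{F}_q$ and $w\in(\mathbb{F}_q^* )^n$, $GRS(n,k,\{a_i\},w)=\{(w_1f(a_1),\dots,w_nf(a_n)) : f\in\mathbb{F}_q[x],\ \deg f\le k-1\}$. Two codes are (monomially) equivalent if one is obtained from the other by permuting coordinates and scaling coordinates by nonzero scalars. A non-GRS MDS code is an MDS code not equivalent to any GRS code. *)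

theory Defs
  imports "HOL-Computational_Algebra.Polynomial" "HOL-Library.Cardinality" "HOL-Combinatorics.Permutations"
begin

text \<open>Vectors of length n over a field are modelled as functions nat => 'a
  that vanish outside the index set {..<n}. A code of length n is a set of such vectors.\<close>

definition hweight :: "nat \<Rightarrow> (nat \<Rightarrow> 'a::zero) \<Rightarrow> nat" where
  "hweight n v = card {i. i < n \<and> v i \<noteq> 0}"

definition min_dist :: "nat \<Rightarrow> (nat \<Rightarrow> 'a::zero) set \<Rightarrow> nat" where
  "min_dist n C = Min (hweight n ` (C - {\<lambda>_. 0}))"

definition code_dim :: "(nat \<Rightarrow> 'a::{finite,field}) set \<Rightarrow> nat" where
  "code_dim C = (THE k. card C = CARD('a) ^ k)"

definition is_MDS :: "nat \<Rightarrow> (nat \<Rightarrow> 'a::{finite,field}) set \<Rightarrow> bool" where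
  "is_MDS n C \<longleftrightarrow> min_dist n C = n - code_dim C + 1"

definition GRS :: "nat \<Rightarrow> nat \<Rightarrow> (nat \<Rightarrow> 'a::field) \<Rightarrow> (nat \<Rightarrow> 'a) \<Rightarrow> (nat \<Rightarrow> 'a) set" where
  "GRS n k a w = {(\<lambda>i. if i < n then w i * poly f (a i) else 0) | f. f = 0 \<or> degree f < k}"

definition mono_equiv :: "nat \<Rightarrow> (nat \<Rightarrow> 'a::field) set \<Rightarrow> (nat \<Rightarrow> 'a) set \<Rightarrow> bool" where
  "mono_equiv n C D \<longleftrightarrow> (\<exists>\<sigma> s. \<sigma> permutes {..<n} \<and> (\<forall>i<n. s i \<noteq> 0) \<and>
      D = (\<lambda>v. \<lambda>i. if i < n then s i * v (\<sigma> i) else 0) ` C)"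

definition is_GRS_equiv :: "nat \<Rightarrow> (nat \<Rightarrow> 'a::field) set \<Rightarrow> bool" where
  "is_GRS_equiv n C \<longleftrightarrow> (\<exists>k a w. inj_on a {..<n} \<and> (\<forall>i<n. w i \<noteq> 0) \<and>
      mono_equiv n C (GRS n k a w))"

definition eval_code :: "nat \<Rightarrow> nat set \<Rightarrow> (nat \<Rightarrow> 'a::field) \<Rightarrow> (nat \<Rightarrow> 'a) set" where
  "eval_code n E \<alpha> = {(\<lambda>i. if i < n then (\<Sum>e\<in>E. c e * \<alpha> i ^ e) else 0) | c. True}"

definition C_hk :: "nat \<Rightarrow> nat \<Rightarrow> nat \<Rightarrow> (nat \<Rightarrow> 'a::field) \<Rightarrow> (nat \<Rightarrow> 'a) set" where
  "C_hk n h k \<alpha> = eval_code n ({0..k-2} \<union> {h}) \<alpha>"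

end

theory Submission imports Defs "HOL-Library.Function_Algebras" begin

(* Suppose the code were monomially equivalent to a GRS code of dimension k'. With
   beta = alpha o sigma it is then spanned by the vectors (s_i beta_i^e)_i, e in {0..k-2} u {h},
   and these lie in GRS(n,k',a,w); comparing dimensions gives k' <= k. Componentwise products
   of two codewords of GRS(n,k',a,w) lie in GRS(n,2k'-1,a,w^2). On the other side every j < 2k
   is a sum of two exponents from {0..k-2} u {h} (this is where 2 <= r <= k-2 enters), so the
   componentwise products contain the 2k vectors (s_i^2 beta_i^j)_i, which are linearly
   independent because 2k <= n. Hence 2k <= 2k'-1 <= 2k-1. *)

definition scale_vec :: "'a::field \<Rightarrow> (nat \<Rightarrow> 'a) \<Rightarrow> nat \<Rightarrow> 'a" where
  "scale_vec c v = (\<lambda>i. c * v i)"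

interpretation V: vector_space "scale_vec :: 'a::field \<Rightarrow> (nat \<Rightarrow> 'a) \<Rightarrow> _"
  by unfold_locales (auto simp: scale_vec_def fun_eq_iff algebra_simps)

lemma sum_fun_apply: "(sum f A) (i::nat) = (\<Sum>a\<in>A. f a i)"
  by (induction A rule: infinite_finite_induct) auto

definition poly_vec :: "nat \<Rightarrow> (nat \<Rightarrow> 'a::field) \<Rightarrow> (nat \<Rightarrow> 'a) \<Rightarrow> 'a poly \<Rightarrow> nat \<Rightarrow> 'a" where
  "poly_vec n u a f = (\<lambda>i. if i < n then u i * poly f (a i) else 0)"

definition power_vec :: "nat \<Rightarrow> (nat \<Rightarrow> 'a::field) \<Rightarrow> (nat \<Rightarrow> 'a) \<Rightarrow> nat \<Rightarrow> nat \<Rightarrow> 'a" where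
  "power_vec n u a j = (\<lambda>i. if i < n then u i * a i ^ j else 0)"

lemma GRS_eq_poly_vecs: "GRS n k a w = {poly_vec n w a f | f. f = 0 \<or> degree f < k}"
  by (simp add: GRS_def poly_vec_def)

lemma power_vec_eq_poly_vec: "power_vec n u a j = poly_vec n u a (monom 1 j)"
  by (simp add: power_vec_def poly_vec_def poly_monom fun_eq_iff)

lemma poly_vec_mult: "poly_vec n u a f * poly_vec n v a g = poly_vec n (u * v) a (f * g)"
  by (simp add: poly_vec_def fun_eq_iff)

lemma power_vec_mult: "power_vec n u a b * power_vec n v a c = power_vec n (u * v) a (b + c)"
  by (simp add: power_vec_def fun_eq_iff power_add)

lemma sum_scale_power_vec:
  "(\<Sum>j\<in>J. scale_vec (c j) (power_vec n u a j)) = poly_vec n u a (\<Sum>j\<in>J. monom (c j) j)"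
  by (simp add: fun_eq_iff sum_fun_apply scale_vec_def power_vec_def poly_vec_def poly_sum
      poly_monom sum_distrib_left mult_ac)

lemma poly_vec_in_span_power_vecs:
  assumes "f = 0 \<or> degree f < N"
  shows "poly_vec n u a f \<in> V.span (power_vec n u a ` {..<N})"
proof -
  have "(\<Sum>j<N. monom (coeff f j) j) = f"
    using assms by (auto simp: poly_eq_iff coeff_sum coeff_monom coeff_eq_0)
  then have "poly_vec n u a f = (\<Sum>j<N. scale_vec (coeff f j) (power_vec n u a j))"
    by (simp add: sum_scale_power_vec)
  also have "\<dots> \<in> V.span (power_vec n u a ` {..<N})"
    by (intro V.span_sum V.span_scale V.span_base) auto
  finally show ?thesis .
qed

lemma poly_vec_eqD:
  assumes "inj_on a {..<n}" "\<forall>i<n. u i \<noteq> 0" "degree f < n" "degree g < n"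
    and "poly_vec n u a f = poly_vec n u a g"
  shows "f = g"
proof (rule poly_eqI_degree)
  show "poly f x = poly g x" if x: "x \<in> a ` {..<n}" for x
  proof -
    obtain i where "i < n" "x = a i" using x by blast
    then have "u i * poly f x = u i * poly g x"
      using fun_cong[OF assms(5), of i] by (simp add: poly_vec_def)
    then show ?thesis using assms(2) \<open>i < n\<close> by simp
  qed
  show "degree f < card (a ` {..<n})" "degree g < card (a ` {..<n})"
    using assms(1,3,4) by (simp_all add: card_image)
qed

lemma power_vec_lincomb_eq_0D:
  assumes "inj_on a {..<n}" "\<forall>i<n. u i \<noteq> 0" "finite J" "J \<subseteq> {..<n}"
    and "(\<Sum>j\<in>J. scale_vec (c j) (power_vec n u a j)) = 0" "j \<in> J"
  shows "c j = 0"
proof -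
  let ?f = "\<Sum>j\<in>J. monom (c j) j"
  have "degree ?f < n"
    using assms(4,6) by (intro degree_sum_less) (auto intro: le_less_trans[OF degree_monom_le])
  moreover have "poly_vec n u a ?f = poly_vec n u a 0"
    using assms(5) by (simp add: sum_scale_power_vec poly_vec_def fun_eq_iff)
  ultimately have "?f = 0"
    using poly_vec_eqD[OF assms(1,2)] by simp
  then have "coeff ?f j = 0" by simp
  then show ?thesis
    using assms(3,6) by (simp add: coeff_sum coeff_monom)
qed

lemma inj_on_power_vec:
  assumes "inj_on a {..<n}" "\<forall>i<n. u i \<noteq> 0"
  shows "inj_on (power_vec n u a) {..<n}"
proof
  fix j j' assume "j \<in> {..<n}" "j' \<in> {..<n}" "power_vec n u a j = power_vec n u a j'"
  then have "monom 1 j = (monom 1 j' :: 'a poly)"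
    using poly_vec_eqD[OF assms] by (simp add: power_vec_eq_poly_vec degree_monom_eq)
  then show "j = j'"
    by (metis coeff_monom one_neq_zero)
qed

lemma independent_power_vecs:
  assumes "inj_on a {..<n}" "\<forall>i<n. u i \<noteq> 0" "N \<le> n"
  shows "V.independent (power_vec n u a ` {..<N})"
proof (rule V.independent_if_scalars_zero)
  have inj: "inj_on (power_vec n u a) {..<N}"
    using inj_on_power_vec[OF assms(1,2)] by (rule inj_on_subset) (use assms(3) in auto)
  fix g v assume sum: "(\<Sum>x\<in>power_vec n u a ` {..<N}. scale_vec (g x) x) = 0"
    and "v \<in> power_vec n u a ` {..<N}"
  then obtain j where j: "j < N" "v = power_vec n u a j" by blast
  have "(\<Sum>j<N. scale_vec (g (power_vec n u a j)) (power_vec n u a j)) = 0"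
    using sum by (simp add: sum.reindex[OF inj])
  then show "g v = 0"
    using power_vec_lincomb_eq_0D[OF assms(1,2), of "{..<N}"] j assms(3) by simp
qed simp

lemma card_power_vecs:
  assumes "inj_on a {..<n}" "\<forall>i<n. u i \<noteq> 0" "N \<le> n"
  shows "card (power_vec n u a ` {..<N}) = N"
proof -
  have "inj_on (power_vec n u a) {..<N}"
    using inj_on_power_vec[OF assms(1,2)] by (rule inj_on_subset) (use assms(3) in auto)
  then show ?thesis by (simp add: card_image)
qed

lemma power_vec_in_GRS: "j < k \<Longrightarrow> power_vec n w a j \<in> GRS n k a w"
  by (auto simp: GRS_eq_poly_vecs power_vec_eq_poly_vec degree_monom_eq)

lemma GRS_dim_le_card_spanning:
  assumes "inj_on a {..<n}" "\<forall>i<n. w i \<noteq> 0" "finite X" "GRS n k a w \<subseteq> V.span X"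
  shows "min k n \<le> card X"
proof -
  have "power_vec n w a ` {..<min k n} \<subseteq> V.span X"
    using power_vec_in_GRS assms(4) by fastforce
  then have "card (power_vec n w a ` {..<min k n}) \<le> card X"
    using V.independent_span_bound[OF assms(3) independent_power_vecs[OF assms(1,2)]] by simp
  then show ?thesis
    using card_power_vecs[OF assms(1,2)] by simp
qed

lemma GRS_Schur_square_bound:
  assumes "inj_on \<beta> {..<n}" "\<forall>i<n. s i \<noteq> 0" "m \<le> n"
    and "\<forall>e\<in>E. power_vec n s \<beta> e \<in> GRS n k a w"
    and "\<forall>j<m. \<exists>b\<in>E. \<exists>c\<in>E. b + c = j"
  shows "m \<le> 2 * k - 1"
proof -
  have s2: "\<forall>i<n. (s * s) i \<noteq> 0"
    using assms(2) by simp
  have "power_vec n (s * s) \<beta> ` {..<m} \<subseteq> V.span (power_vec n (w * w) a ` {..<2 * k - 1})"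
  proof
    fix v assume "v \<in> power_vec n (s * s) \<beta> ` {..<m}"
    then obtain b c where "b \<in> E" "c \<in> E" and v: "v = power_vec n s \<beta> b * power_vec n s \<beta> c"
      using assms(5) by (auto simp: power_vec_mult)
    then obtain f g where f: "f = 0 \<or> degree f < k" "power_vec n s \<beta> b = poly_vec n w a f"
      and g: "g = 0 \<or> degree g < k" "power_vec n s \<beta> c = poly_vec n w a g"
      using assms(4) unfolding GRS_eq_poly_vecs by blast
    have "v = poly_vec n (w * w) a (f * g)"
      using v f(2) g(2) by (simp add: poly_vec_mult)
    moreover have "f * g = 0 \<or> degree (f * g) < 2 * k - 1"
      using f(1) g(1) degree_mult_le[of f g] by auto
    ultimately show "v \<in> V.span (power_vec n (w * w) a ` {..<2 * k - 1})"
      using poly_vec_in_span_power_vecs by blast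
  qed
  then have "card (power_vec n (s * s) \<beta> ` {..<m}) \<le> card (power_vec n (w * w) a ` {..<2 * k - 1})"
    using V.independent_span_bound[OF finite_imageI[OF finite_lessThan]
        independent_power_vecs[OF assms(1) s2 assms(3)]] by blast
  also have "\<dots> \<le> 2 * k - 1"
    using card_image_le[of "{..<2 * k - 1}"] by simp
  finally show ?thesis
    using card_power_vecs[OF assms(1) s2 assms(3)] by simp
qed

lemma monomial_image_eval_code:
  assumes "\<sigma> permutes {..<n}"
  shows "(\<lambda>v i. if i < n then s i * v (\<sigma> i) else 0) ` eval_code n E \<alpha>
    = range (\<lambda>c. \<Sum>e\<in>E. scale_vec (c e) (power_vec n s (\<alpha> \<circ> \<sigma>) e))"
    (is "?G ` _ = range ?L")
proof -
  let ?F = "\<lambda>c i. if i < n then \<Sum>e\<in>E. c e * \<alpha> i ^ e else 0"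
  have "eval_code n E \<alpha> = range ?F"
    by (auto simp: eval_code_def)
  moreover have "?G (?F c) = ?L c" for c
    using permutes_in_image[OF assms]
    by (auto simp: fun_eq_iff sum_fun_apply scale_vec_def power_vec_def sum_distrib_left mult_ac)
  ultimately show ?thesis
    by (simp add: image_image)
qed

lemma mono_equiv_eval_code_GRS:
  assumes "mono_equiv n (eval_code n E \<alpha>) (GRS n k a w)" "finite E" "inj_on \<alpha> {..<n}"
  obtains s \<beta> where "inj_on \<beta> {..<n}" "\<forall>i<n. s i \<noteq> 0"
    "\<forall>e\<in>E. power_vec n s \<beta> e \<in> GRS n k a w"
    "GRS n k a w \<subseteq> V.span (power_vec n s \<beta> ` E)"
proof -
  obtain \<sigma> s where \<sigma>: "\<sigma> permutes {..<n}" and s: "\<forall>i<n. s i \<noteq> 0"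
    and D: "GRS n k a w = (\<lambda>v i. if i < n then s i * v (\<sigma> i) else 0) ` eval_code n E \<alpha>"
    using assms(1) unfolding mono_equiv_def by blast
  let ?v = "power_vec n s (\<alpha> \<circ> \<sigma>)"
  note D = D[unfolded monomial_image_eval_code[OF \<sigma>]]
  have "inj_on (\<alpha> \<circ> \<sigma>) {..<n}"
    by (rule comp_inj_on[OF permutes_inj_on[OF \<sigma>]]) (simp add: permutes_image[OF \<sigma>] assms(3))
  moreover have "?v e \<in> GRS n k a w" if "e \<in> E" for e
  proof -
    let ?\<delta> = "\<lambda>e'. if e' = e then 1 else 0"
    have "(\<Sum>e'\<in>E. scale_vec (?\<delta> e') (?v e')) = (\<Sum>e'\<in>E. if e' = e then ?v e' else 0)"
      by (rule sum.cong) (auto simp: scale_vec_def fun_eq_iff)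
    also have "\<dots> = ?v e"
      using that assms(2) by (simp add: sum.delta)
    finally show ?thesis
      unfolding D by (rule range_eqI[where x = ?\<delta>, OF sym])
  qed
  moreover have "GRS n k a w \<subseteq> V.span (?v ` E)"
    unfolding D by (intro image_subsetI V.span_sum V.span_scale V.span_base imageI)
  ultimately show thesis
    using that s by blast
qed

lemma exponents_sum_cover:
  fixes k h j :: nat
  assumes "k + 1 \<le> h" "h + 3 \<le> 2 * k" "j < 2 * k"
  shows "\<exists>b\<in>{0..k-2} \<union> {h}. \<exists>c\<in>{0..k-2} \<union> {h}. b + c = j"
proof (cases "j \<le> 2 * k - 4")
  case True
  then show ?thesis
    by (intro bexI[of _ "min j (k - 2)"] bexI[of _ "j - min j (k - 2)"]) auto
next
  case False
  then show ?thesis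
    using assms by (intro bexI[of _ h] bexI[of _ "j - h"]) auto
qed

theorem theorem4p4:
  fixes \<alpha> :: "nat \<Rightarrow> 'a::{finite,field}"
    and n k r h :: nat
  assumes "4 \<le> k" and "2 * k + 1 \<le> n" and "n \<le> CARD('a)"
    and "2 \<le> r" and "r \<le> k - 2"
    and "h = (k - 1) + r" and "h + 2 \<le> CARD('a)"
    and "inj_on \<alpha> {..<n}"
    and "is_MDS n (C_hk n h k \<alpha>)"
  shows "is_MDS n (C_hk n h k \<alpha>) \<and> \<not> is_GRS_equiv n (C_hk n h k \<alpha>)"
proof
  show "is_MDS n (C_hk n h k \<alpha>)" by fact
  show "\<not> is_GRS_equiv n (C_hk n h k \<alpha>)"
  proof
    let ?E = "{0..k-2} \<union> {h}"
    assume "is_GRS_equiv n (C_hk n h k \<alpha>)"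
    then obtain k' a w where a: "inj_on a {..<n}" and w: "\<forall>i<n. w i \<noteq> 0"
      and equiv: "mono_equiv n (eval_code n ?E \<alpha>) (GRS n k' a w)"
      unfolding is_GRS_equiv_def C_hk_def by blast
    have "finite ?E" by simp
    obtain s \<beta> where \<beta>: "inj_on \<beta> {..<n}" and s: "\<forall>i<n. s i \<noteq> 0"
      and in_GRS: "\<forall>e\<in>?E. power_vec n s \<beta> e \<in> GRS n k' a w"
      and spanning: "GRS n k' a w \<subseteq> V.span (power_vec n s \<beta> ` ?E)"
      by (rule mono_equiv_eval_code_GRS[OF equiv \<open>finite ?E\<close> assms(8)])
    have "min k' n \<le> card (power_vec n s \<beta> ` ?E)"
      using GRS_dim_le_card_spanning[OF a w _ spanning] by simp
    also have "\<dots> \<le> card ?E"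
      by (rule card_image_le) simp
    also have "\<dots> \<le> k"
      using card_Un_le[of "{0..k-2}" "{h}"] assms(1) by simp
    finally have "k' \<le> k"
      using assms(2) by simp
    have "k + 1 \<le> h" "h + 3 \<le> 2 * k"
      using assms(1,4,5,6) by arith+
    then have "\<forall>j<2 * k. \<exists>b\<in>?E. \<exists>c\<in>?E. b + c = j"
      using exponents_sum_cover by blast
    then have "2 * k \<le> 2 * k' - 1"
      using GRS_Schur_square_bound[OF \<beta> s _ in_GRS] assms(2) by simp
    with \<open>k' \<le> k\<close> show False
      using assms(1) by linarith
  qed
qed

end
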